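(* Let $\vec f=(f_1,\dots,f_n)$ be a profile of acknowledgement-based protocols. The following are equivalent: (i) $\vec f$ is an equilibrium; (ii) for every player $i\in[n]$: (a) $C_i^{(\vec f_{-i},g_i)}(h_0)=C_i^{(\vec f_{-i},r_i)}(h_0)=C_i^{\vec f}(h_0)$ for all $g_i,r_i\in\mathcal G_i^{\vec f}$, and (b) $C_i^{(\vec f_{-i},g_i)}(h_0)\le C_i^{(\vec f_{-i},r_i)}(h_0)$ for all $g_i\in\mathcal G_i^{\vec f}$ and all protocols $r_i\notin\mathcal G_i^{\vec f}$ of player $i$.
   Context: Contention game: $n$ players, channels $K=\{1,\dots,k\}$, slots $t=1,2,\dots$; each player has one packet, initially pending; in each slot a pending player chooses (possibly randomly) an action in $A=\{0,1,\dots,k\}$ ($0$ = idle, $a$ = transmit on channel $a$); a lone transmitter on a channel succeeds and leaves, colliding transmitters remain pending. $X_{i,t}$ is player $i$'s action at slot $t$, $h_{i,t}$ her personal history. Acknowledgement-based protocols: decision rules depend only on $h_{i,t-1}$; only transmitting players learn whether they succeeded. $T_i$ is player $i$'s latency and $C_i^{\vec g}(h_0)=\mathbb E[T_i\mid\vec g]$ her unconditional expected latency under profile $\vec g$; $(\vec f_{-i},g_i)$ is $\vec f$ with $f_i$ replaced by $g_i$. $\vec f$ is an equilibrium if for every $i$, slot $t$ and history, player $i$ cannot decrease her conditional expected latency by unilaterally deviating after $t$. For $\tau^*\ge1$ and $h_{i,\tau^*}=(a_{i,1},\dots,a_{i,\tau^*})$, $g_i(h_{i,\tau^*})$ plays $a_{i,t}$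 with probability $1$ for $1\le t\le\tau^*$ and follows $f_{i,t}$ for $t>\tau^*$. $h_{i,\tau^*}$ is consistent with $\vec f$ if it occurs for player $i$ with positive probability under $\vec f$; $\mathcal G_i^{\vec f}$ is the set of all $g_i(h_{i,\tau^*})$, $\tau^*\ge1$, with $h_{i,\tau^*}$ consistent with $\vec f$. *)

theory Defs
  imports "HOL-Probability.Probability"
begin

text \<open>
  Players are 0,...,n-1; actions are naturals, 0 = idle, a in {1..k} = transmit on channel a.
  A player's personal history is the list of her own past actions (while pending, all her
  transmissions failed).
  The global state records, for every player, her action history and whether she has succeeded.
\<close>

type_synonym protocol = "nat list \<Rightarrow> nat pmf"
type_synonym profile = "nat \<Rightarrow> protocol"
type_synonym gstate = "nat \<Rightarrow> nat list \<times> bool"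

definition is_protocol :: "nat \<Rightarrow> protocol \<Rightarrow> bool" where
  "is_protocol k f \<longleftrightarrow> (\<forall>hs. set_pmf (f hs) \<subseteq> {0..k})"

definition pending :: "gstate \<Rightarrow> nat \<Rightarrow> bool" where
  "pending s j \<longleftrightarrow> \<not> snd (s j)"

fun sample_actions :: "profile \<Rightarrow> gstate \<Rightarrow> nat \<Rightarrow> (nat \<Rightarrow> nat) pmf" where
  "sample_actions f s 0 = return_pmf (\<lambda>_. 0)"
| "sample_actions f s (Suc m) =
     bind_pmf (sample_actions f s m) (\<lambda>a.
     bind_pmf (if pending s m then f m (fst (s m)) else return_pmf 0) (\<lambda>x.
     return_pmf (a(m := x))))"

definition outcome :: "nat \<Rightarrow> gstate \<Rightarrow> (nat \<Rightarrow> nat) \<Rightarrow> gstate" where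
  "outcome n s a = (\<lambda>j. if j < n \<and> pending s j then
       (fst (s j) @ [a j],
        a j \<noteq> 0 \<and> (\<forall>l<n. l \<noteq> j \<and> pending s l \<longrightarrow> a l \<noteq> a j))
     else s j)"

definition step :: "nat \<Rightarrow> profile \<Rightarrow> gstate \<Rightarrow> gstate pmf" where
  "step n f s = map_pmf (outcome n s) (sample_actions f s n)"

definition init_state :: gstate where
  "init_state = (\<lambda>_. ([], False))"

fun run :: "nat \<Rightarrow> profile \<Rightarrow> nat \<Rightarrow> gstate pmf" where
  "run n f 0 = return_pmf init_state"
| "run n f (Suc t) = bind_pmf (run n f t) (step n f)"

text \<open>Unconditional expected latency C_i^f(h_0) = E[T_i] = sum_{t>=0} P(T_i > t),
  where T_i > t iff player i is still pending after t slots (value in [0,\<infinity>]).\<close>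
definition exp_latency :: "nat \<Rightarrow> profile \<Rightarrow> nat \<Rightarrow> ennreal" where
  "exp_latency n f i = (\<Sum>t. ennreal (measure_pmf.prob (run n f t) {s. pending s i}))"

definition hist_prob :: "nat \<Rightarrow> profile \<Rightarrow> nat \<Rightarrow> nat list \<Rightarrow> real" where
  "hist_prob n f i h = measure_pmf.prob (run n f (length h)) {s. pending s i \<and> fst (s i) = h}"

text \<open>Conditional expected latency E[T_i | player i pending with history h after |h| slots]
  = sum_t P(T_i > t | history h).\<close>
definition cond_latency :: "nat \<Rightarrow> profile \<Rightarrow> nat \<Rightarrow> nat list \<Rightarrow> ennreal" where
  "cond_latency n f i h = (\<Sum>t. if t < length h then 1 else
      ennreal (measure_pmf.prob (run n f t)
                 {s. pending s i \<and> take (length h) (fst (s i)) = h} / hist_prob n f i h))"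

definition equilibrium :: "nat \<Rightarrow> nat \<Rightarrow> profile \<Rightarrow> bool" where
  "equilibrium n k f \<longleftrightarrow>
     (\<forall>i<n. \<forall>h. hist_prob n f i h > 0 \<longrightarrow>
        (\<forall>g. is_protocol k g \<longrightarrow> (\<forall>hs. length hs < length h \<longrightarrow> g hs = f i hs) \<longrightarrow>
             cond_latency n f i h \<le> cond_latency n (f(i := g)) i h))"

definition consistent :: "nat \<Rightarrow> profile \<Rightarrow> nat \<Rightarrow> nat list \<Rightarrow> bool" where
  "consistent n f i h \<longleftrightarrow> measure_pmf.prob (run n f (length h)) {s. fst (s i) = h} > 0"

definition gdev :: "profile \<Rightarrow> nat \<Rightarrow> nat list \<Rightarrow> protocol" where
  "gdev f i h = (\<lambda>hs. if length hs < length h then return_pmf (h ! length hs) else f i hs)"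

definition Gset :: "nat \<Rightarrow> profile \<Rightarrow> nat \<Rightarrow> protocol set" where
  "Gset n f i = {gdev f i h | h. 1 \<le> length h \<and> consistent n f i h}"

end

theory Submission
  imports Defs
begin

text \<open>
  Equilibrium is equivalent to every \<open>f\<^sub>i\<close> being a best response at the empty history;
  one direction is the case \<open>h = []\<close> of the definition. For the other, let \<open>g\<^sub>h\<close> play the
  history \<open>h\<close> deterministically and then follow \<open>g\<close>. By Bayes' rule, after a history \<open>h\<close> of
  positive probability the conditional latency of a deviation \<open>g\<close> is \<open>|h| + c \<cdot> T(g\<^sub>h)\<close>, while
  the unconditional latency of \<open>g\<^sub>h\<close> is \<open>A + T(g\<^sub>h)\<close>; here \<open>T\<close> sums the survival
  probabilities from slot \<open>|h|\<close> on, and \<open>c\<close>, \<open>A\<close> do not depend on \<open>g\<close>. So it suffices that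
  \<open>(f\<^sub>i)\<^sub>h\<close> is again a best response. It is, because (as in Kuhn's theorem) the
  randomisation of \<open>f\<^sub>i\<close> after \<open>h\<close> may be drawn before the game starts: the latency of
  \<open>(f\<^sub>i)\<^sub>h\<close> is the average of the latencies of \<open>(f\<^sub>i)\<^sub>h\<^sub>a\<close> over the actions \<open>a\<close> in the
  support of \<open>f\<^sub>i(h)\<close>; none of them is below the minimum, so all of them attain it.
  The same fact makes the protocols in \<open>\<G>\<^sub>i\<close> indifferent and optimal, and as \<open>\<G>\<^sub>i\<close> is
  never empty, (a) and (b) in turn say that \<open>f\<^sub>i\<close> is a best response.
\<close>

section \<open>Slots and runs\<close>

definition action_pmf :: "profile \<Rightarrow> gstate \<Rightarrow> nat \<Rightarrow> nat pmf" where
  "action_pmf F s j = (if pending s j then F j (fst (s j)) else return_pmf 0)"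

lemma sample_actions_Suc:
  "sample_actions F s (Suc m) =
     bind_pmf (sample_actions F s m) (\<lambda>a. bind_pmf (action_pmf F s m) (\<lambda>x. return_pmf (a(m := x))))"
  by (simp add: action_pmf_def)

declare sample_actions.simps(2)[simp del]

lemma sample_actions_cong:
  "(\<And>j. j < m \<Longrightarrow> action_pmf F s j = action_pmf G s j) \<Longrightarrow> sample_actions F s m = sample_actions G s m"
  by (induction m) (simp_all add: sample_actions_Suc)

lemma set_sample_actions:
  "a \<in> set_pmf (sample_actions F s m) \<Longrightarrow> j < m \<Longrightarrow> a j \<in> set_pmf (action_pmf F s j)"
  by (induction m arbitrary: a) (auto simp: sample_actions_Suc less_Suc_eq)

lemma sample_actions_split:
  assumes "i < m" "\<And>j. j \<noteq> i \<Longrightarrow> F j = G j"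
  shows "sample_actions F s m =
    bind_pmf (action_pmf F s i) (\<lambda>x. map_pmf (\<lambda>a. a(i := x)) (sample_actions G s m))"
  using assms(1)
proof (induction m)
  case 0
  then show ?case by simp
next
  case (Suc m)
  show ?case
  proof (cases "i = m")
    case True
    have "sample_actions F s m = sample_actions G s m"
      using assms(2) True by (intro sample_actions_cong) (simp add: action_pmf_def)
    then show ?thesis
      unfolding sample_actions_Suc map_pmf_def bind_assoc_pmf bind_return_pmf True
      by (subst bind_commute_pmf) simp
  next
    case False
    have "i < m"
      using Suc.prems False by simp
    have "action_pmf F s m = action_pmf G s m"
      using assms(2) False by (simp add: action_pmf_def)
    then show ?thesis
      unfolding sample_actions_Suc Suc.IH[OF \<open>i < m\<close>] map_pmf_def bind_assoc_pmf bind_return_pmf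
      by (simp only: fun_upd_twist[OF False])
  qed
qed

lemma step_cong:
  "(\<And>j. j < n \<Longrightarrow> action_pmf F s j = action_pmf G s j) \<Longrightarrow> step n F s = step n G s"
  unfolding step_def by (metis sample_actions_cong)

definition step_given :: "nat \<Rightarrow> profile \<Rightarrow> nat \<Rightarrow> gstate \<Rightarrow> nat \<Rightarrow> gstate pmf" where
  "step_given n F i s x =
     map_pmf (\<lambda>a. outcome n s (a(i := x))) (sample_actions (F(i := \<lambda>_. return_pmf 0)) s n)"

lemma step_given_fun_upd [simp]: "step_given n (F(i := p)) i s = step_given n F i s"
  unfolding step_given_def by simp

lemma step_eq_bind_step_given:
  "i < n \<Longrightarrow> step n F s = bind_pmf (action_pmf F s i) (step_given n F i s)"
  unfolding step_def step_given_def
  by (subst sample_actions_split[of i n F "F(i := \<lambda>_. return_pmf 0)"])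
    (auto simp: map_bind_pmf pmf.map_comp o_def)

lemma set_step:
  assumes "s' \<in> set_pmf (step n F s)" "i < n"
  shows "(pending s i \<longrightarrow> (\<exists>x\<in>set_pmf (F i (fst (s i))). fst (s' i) = fst (s i) @ [x]))
       \<and> (\<not> pending s i \<longrightarrow> s' i = s i)"
proof -
  from assms obtain a where a: "a \<in> set_pmf (sample_actions F s n)" "s' = outcome n s a"
    by (auto simp: step_def)
  from set_sample_actions[OF a(1) assms(2)] have "a i \<in> set_pmf (action_pmf F s i)" .
  then show ?thesis
    using a(2) assms(2) by (auto simp: outcome_def action_pmf_def)
qed

lemma run_cong:
  assumes "\<And>t' s j. t' < t \<Longrightarrow> s \<in> set_pmf (run n F t') \<Longrightarrow> j < n \<Longrightarrow> pending s j \<Longrightarrow>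
             F j (fst (s j)) = G j (fst (s j))"
  shows "run n F t = run n G t"
  using assms
proof (induction t)
  case 0
  then show ?case by simp
next
  case (Suc t)
  then have "run n F t = run n G t"
    by (meson less_SucI)
  moreover have "step n F s = step n G s" if "s \<in> set_pmf (run n F t)" for s
    using Suc.prems[of t] that by (intro step_cong) (auto simp: action_pmf_def)
  ultimately show ?case
    by (simp cong: bind_pmf_cong)
qed

definition feasible :: "protocol \<Rightarrow> nat list \<Rightarrow> bool" where
  "feasible p h \<longleftrightarrow> (\<forall>j<length h. h ! j \<in> set_pmf (p (take j h)))"

lemma feasible_Nil [simp]: "feasible p []"
  by (simp add: feasible_def)

lemma feasible_snoc [simp]: "feasible p (h @ [x]) \<longleftrightarrow> feasible p h \<and> x \<in> set_pmf (p h)"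
  unfolding feasible_def by (auto simp: nth_append less_Suc_eq)

lemma set_run:
  assumes "s \<in> set_pmf (run n F t)" "i < n"
  shows "(pending s i \<longrightarrow> length (fst (s i)) = t) \<and> feasible (F i) (fst (s i))"
  using assms(1)
proof (induction t arbitrary: s)
  case 0
  then show ?case by (simp add: init_state_def)
next
  case (Suc t)
  then obtain s0 where s0: "s0 \<in> set_pmf (run n F t)" "s \<in> set_pmf (step n F s0)"
    by auto
  with Suc.IH set_step[OF s0(2) assms(2)] show ?case
    by (cases "pending s0 i") (auto simp: pending_def)
qed

text \<open>Before slot \<open>t\<close>, player \<open>i\<close>'s rule is only queried on feasible histories of length below \<open>t\<close>.\<close>
lemma run_fun_upd_cong:
  assumes "i < n" "\<And>hs. length hs < t \<Longrightarrow> feasible p hs \<Longrightarrow> p hs = q hs"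
  shows "run n (f(i := p)) t = run n (f(i := q)) t"
proof (rule run_cong)
  fix t' s j
  assume "t' < t" "s \<in> set_pmf (run n (f(i := p)) t')" "j < n" "pending s j"
  then show "(f(i := p)) j (fst (s j)) = (f(i := q)) j (fst (s j))"
    using set_run[of s n "f(i := p)" t' i] assms by (cases "j = i") auto
qed

lemma step_mixture:
  assumes "i < n"
  shows "step n (f(i := p)) s = bind_pmf (p h) (\<lambda>x. step n (f(i := p(h := return_pmf x))) s)"
proof (cases "pending s i \<and> fst (s i) = h")
  case True
  then show ?thesis
    by (simp add: step_eq_bind_step_given[OF assms] action_pmf_def bind_return_pmf)
next
  case False
  then have "step n (f(i := p(h := return_pmf x))) s = step n (f(i := p)) s" for x
    by (intro step_cong) (auto simp: action_pmf_def)
  then show ?thesis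
    by simp
qed

lemma run_mixture:
  assumes "i < n"
  shows "run n (f(i := p)) t = bind_pmf (p h) (\<lambda>x. run n (f(i := p(h := return_pmf x))) t)"
proof (induction t)
  case 0
  then show ?case by simp
next
  case (Suc t)
  show ?case
  proof (cases "t = length h")
    case True
    have "run n (f(i := p(h := return_pmf x))) t = run n (f(i := p)) t" for x
      using True by (intro run_fun_upd_cong[OF assms]) auto
    then show ?thesis
      by (simp only: run.simps) (subst bind_commute_pmf, rule bind_pmf_cong, simp_all add: step_mixture[OF assms])
  next
    case False
    have "bind_pmf (run n (f(i := p(h := return_pmf x))) t) (step n (f(i := p))) =
          run n (f(i := p(h := return_pmf x))) (Suc t)" for x
      unfolding run.simps
    proof (intro bind_pmf_cong refl step_cong)
      fix s j
      assume "s \<in> set_pmf (run n (f(i := p(h := return_pmf x))) t)"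
      then show "action_pmf (f(i := p)) s j = action_pmf (f(i := p(h := return_pmf x))) s j"
        using set_run[of s n _ t i] assms False by (auto simp: action_pmf_def)
    qed
    then show ?thesis
      by (simp only: run.simps Suc.IH bind_assoc_pmf)
  qed
qed

section \<open>Forcing a prefix of the history\<close>

definition force_prefix :: "nat list \<Rightarrow> protocol \<Rightarrow> protocol" where
  "force_prefix h p = (\<lambda>hs. if length hs < length h then return_pmf (h ! length hs) else p hs)"

lemma force_prefix_Nil [simp]: "force_prefix [] p = p"
  by (simp add: force_prefix_def)

lemma gdev_eq_force_prefix: "gdev f i h = force_prefix h (f i)"
  by (simp add: gdev_def force_prefix_def)

lemma is_protocol_force_prefix: "is_protocol k p \<Longrightarrow> feasible p h \<Longrightarrow> is_protocol k (force_prefix h p)"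
  unfolding is_protocol_def force_prefix_def feasible_def by (auto simp: subset_iff)

lemma take_eq_if_feasible_forced:
  assumes "feasible q hs" "length h \<le> length hs"
    "\<And>hs'. length hs' < length h \<Longrightarrow> q hs' = return_pmf (h ! length hs')"
  shows "take (length h) hs = h"
proof (rule nth_equalityI)
  fix j
  assume "j < length (take (length h) hs)"
  then have j: "j < length h" "j < length hs"
    by auto
  have "hs ! j \<in> set_pmf (q (take j hs))"
    using assms(1) j by (auto simp: feasible_def)
  then show "take (length h) hs ! j = h ! j"
    using assms(3) j by simp
qed (use assms(2) in simp)

lemma take_run_force_prefix:
  assumes "s \<in> set_pmf (run n (f(i := force_prefix h p)) t)" "i < n" "pending s i" "length h \<le> t"
  shows "take (length h) (fst (s i)) = h"
  using set_run[OF assms(1,2)] assms(3,4)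
  by (intro take_eq_if_feasible_forced[of "force_prefix h p"]) (auto simp: force_prefix_def)

lemma run_force_prefix_snoc:
  assumes "i < n"
  shows "run n (f(i := (force_prefix h p)(h := return_pmf a))) t = run n (f(i := force_prefix (h @ [a]) p)) t"
proof (rule run_fun_upd_cong[OF assms])
  fix hs
  assume feas: "feasible ((force_prefix h p)(h := return_pmf a)) hs"
  consider "length hs < length h" | "length hs = length h" | "length hs > length h"
    by linarith
  then show "((force_prefix h p)(h := return_pmf a)) hs = force_prefix (h @ [a]) p hs"
  proof cases
    case 2
    have "take (length h) hs = h"
      using 2 by (intro take_eq_if_feasible_forced[OF feas]) (auto simp: force_prefix_def)
    with 2 show ?thesis
      by (auto simp: force_prefix_def)
  qed (auto simp: force_prefix_def nth_append)
qed

lemma run_force_prefix_mixture: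
  assumes "i < n"
  shows "run n (f(i := force_prefix h p)) t =
    bind_pmf (p h) (\<lambda>x. run n (f(i := force_prefix (h @ [x]) p)) t)"
proof -
  have "force_prefix h p h = p h"
    by (simp add: force_prefix_def)
  then show ?thesis
    using run_mixture[OF assms, of f "force_prefix h p" t h]
    by (simp add: run_force_prefix_snoc[OF assms])
qed

definition likelihood :: "protocol \<Rightarrow> nat list \<Rightarrow> real" where
  "likelihood p h = (\<Prod>j<length h. pmf (p (take j h)) (h ! j))"

lemma likelihood_Nil [simp]: "likelihood p [] = 1"
  by (simp add: likelihood_def)

lemma likelihood_snoc: "likelihood p (h @ [a]) = likelihood p h * pmf (p h) a"
proof -
  have "(\<Prod>j<length h. pmf (p (take j (h @ [a]))) ((h @ [a]) ! j)) = likelihood p h"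
    unfolding likelihood_def by (intro prod.cong) (auto simp: nth_append)
  then show ?thesis
    by (simp add: likelihood_def)
qed

lemma likelihood_nonneg: "0 \<le> likelihood p h"
  by (simp add: likelihood_def prod_nonneg)

lemma likelihood_cong:
  "(\<And>hs. length hs < length h \<Longrightarrow> p hs = q hs) \<Longrightarrow> likelihood p h = likelihood q h"
  unfolding likelihood_def by (intro prod.cong) auto

lemma emeasure_run_force_prefix_eq_0:
  assumes "i < n" "length h' = length h" "h' \<noteq> h"
    "E \<subseteq> {s. pending s i \<and> take (length h) (fst (s i)) = h}"
  shows "emeasure (run n (f(i := force_prefix h' p)) t) E = 0"
proof -
  have "s \<notin> E" if s: "s \<in> set_pmf (run n (f(i := force_prefix h' p)) t)" for s
  proof
    assume "s \<in> E"
    then have pend: "pending s i" and take_h: "take (length h) (fst (s i)) = h"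
      using assms(4) by auto
    have "length h \<le> length (fst (s i))"
      using arg_cong[OF take_h, of length] by (simp add: min_def split: if_splits)
    then have "take (length h') (fst (s i)) = h'"
      using take_run_force_prefix[OF s assms(1) pend] set_run[OF s assms(1)] pend assms(2) by simp
    with take_h assms(2,3) show False
      by simp
  qed
  then show ?thesis
    by (simp add: measure_pmf.emeasure_eq_measure measure_pmf_zero_iff disjoint_iff)
qed

lemma emeasure_run_likelihood:
  assumes "i < n" "E \<subseteq> {s. pending s i \<and> take (length h) (fst (s i)) = h}"
  shows "emeasure (run n (f(i := p)) t) E =
    ennreal (likelihood p h) * emeasure (run n (f(i := force_prefix h p)) t) E"
  using assms(2)
proof (induction h arbitrary: E rule: rev_induct)
  case Nil
  then show ?case by simp
next
  case (snoc a h)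
  let ?run = "\<lambda>x. run n (f(i := force_prefix (h @ [x]) p)) t"
  have "take (length h) xs = h" if "take (length (h @ [a])) xs = h @ [a]" for xs :: "nat list"
    using arg_cong[OF that, of "take (length h)"] by simp
  then have "E \<subseteq> {s. pending s i \<and> take (length h) (fst (s i)) = h}"
    using snoc.prems by blast
  note IH = snoc.IH[OF this]
  have "emeasure (?run x) E = 0" if "x \<noteq> a" for x
    using that by (intro emeasure_run_force_prefix_eq_0[OF assms(1) _ _ snoc.prems]) simp_all
  then have "emeasure (run n (f(i := force_prefix h p)) t) E =
      (\<integral>\<^sup>+x. emeasure (?run a) E * indicator {a} x \<partial>p h)"
    unfolding run_force_prefix_mixture[OF assms(1), of f h p t] emeasure_bind_pmf
    by (intro nn_integral_cong) (auto split: split_indicator)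
  also have "\<dots> = emeasure (?run a) E * ennreal (pmf (p h) a)"
    by (simp add: nn_integral_cmult_indicator emeasure_pmf_single)
  finally have mixture: "emeasure (run n (f(i := force_prefix h p)) t) E =
      emeasure (?run a) E * ennreal (pmf (p h) a)" .
  show ?case
    unfolding IH mixture likelihood_snoc ennreal_mult[OF likelihood_nonneg pmf_nonneg] by (simp only: mult_ac)
qed

lemma measure_run_likelihood:
  assumes "i < n" "E \<subseteq> {s. pending s i \<and> take (length h) (fst (s i)) = h}"
  shows "measure_pmf.prob (run n (f(i := p)) t) E =
    likelihood p h * measure_pmf.prob (run n (f(i := force_prefix h p)) t) E"
  using emeasure_run_likelihood[OF assms, of f p t]
  by (simp add: measure_pmf.emeasure_eq_measure likelihood_nonneg ennreal_mult[symmetric] del: ennreal_mult')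

section \<open>Latencies of prefix-forcing deviations\<close>

lemma exp_latency_eq_suminf_emeasure:
  "exp_latency n F i = (\<Sum>t. emeasure (run n F t) {s. pending s i})"
  by (simp add: exp_latency_def measure_pmf.emeasure_eq_measure)

lemma exp_latency_force_prefix_mixture:
  assumes "i < n"
  shows "exp_latency n (f(i := force_prefix h p)) i =
    (\<integral>\<^sup>+x. exp_latency n (f(i := force_prefix (h @ [x]) p)) i \<partial>p h)"
proof -
  have "emeasure (run n (f(i := force_prefix h p)) t) {s. pending s i} =
      (\<integral>\<^sup>+x. emeasure (run n (f(i := force_prefix (h @ [x]) p)) t) {s. pending s i} \<partial>p h)" for t
    unfolding run_force_prefix_mixture[OF assms, of f h p t] by (rule emeasure_bind_pmf)
  then show ?thesis
    unfolding exp_latency_eq_suminf_emeasure by (simp add: nn_integral_suminf)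
qed

lemma eq_lower_bound_if_nn_integral_pmf_eq:
  fixes X :: "'a \<Rightarrow> ennreal" and M :: "'a pmf"
  assumes "(\<integral>\<^sup>+x. X x \<partial>measure_pmf M) = c" "\<And>x. x \<in> set_pmf M \<Longrightarrow> c \<le> X x" "a \<in> set_pmf M"
  shows "X a = c"
proof (cases "c = \<top>")
  case True
  then show ?thesis
    using assms(2,3) by (simp add: top_unique)
next
  case False
  have "(\<integral>\<^sup>+x. X x \<partial>M) = (\<integral>\<^sup>+x. c + (X x - c) \<partial>M)"
    using assms(2) by (intro nn_integral_cong_AE) (simp add: AE_measure_pmf_iff add_diff_inverse_ennreal)
  also have "\<dots> = c + (\<integral>\<^sup>+x. X x - c \<partial>M)"
    by (simp add: nn_integral_add)
  finally have "c + (\<integral>\<^sup>+x. X x - c \<partial>M) = c + 0"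
    using assms(1) by simp
  then have "(\<integral>\<^sup>+x. X x - c \<partial>M) = 0"
    using False by (simp add: ennreal_add_left_cancel)
  then have "X a - c = 0"
    using assms(3) by (simp add: nn_integral_0_iff_AE AE_measure_pmf_iff)
  then show ?thesis
    using assms(2,3) by (simp add: diff_eq_0_iff_ennreal antisym)
qed

definition best_response :: "nat \<Rightarrow> nat \<Rightarrow> profile \<Rightarrow> nat \<Rightarrow> bool" where
  "best_response n k f i \<longleftrightarrow>
     (\<forall>r. is_protocol k r \<longrightarrow> exp_latency n f i \<le> exp_latency n (f(i := r)) i)"

lemma exp_latency_force_prefix_best_response:
  assumes "i < n" "is_protocol k (f i)" "best_response n k f i" "feasible (f i) h"
  shows "exp_latency n (f(i := force_prefix h (f i))) i = exp_latency n f i"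
  using assms(4)
proof (induction h rule: rev_induct)
  case Nil
  then show ?case by simp
next
  case (snoc a h)
  then have "feasible (f i) h" "a \<in> set_pmf (f i h)"
    by simp_all
  let ?X = "\<lambda>x. exp_latency n (f(i := force_prefix (h @ [x]) (f i))) i"
  have mix: "(\<integral>\<^sup>+x. ?X x \<partial>f i h) = exp_latency n f i"
    unfolding exp_latency_force_prefix_mixture[OF assms(1), of f h "f i", symmetric]
    using snoc.IH \<open>feasible (f i) h\<close> .
  have above: "exp_latency n f i \<le> ?X x" if "x \<in> set_pmf (f i h)" for x
    using assms(3) is_protocol_force_prefix[OF assms(2), of "h @ [x]"] \<open>feasible (f i) h\<close> that
    by (simp add: best_response_def)
  show ?case
    by (rule eq_lower_bound_if_nn_integral_pmf_eq[where X = ?X, OF mix above \<open>a \<in> set_pmf (f i h)\<close>])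
qed

definition tail_latency :: "nat \<Rightarrow> profile \<Rightarrow> nat \<Rightarrow> nat \<Rightarrow> ennreal" where
  "tail_latency n F i m = (\<Sum>t. ennreal (measure_pmf.prob (run n F (t + m)) {s. pending s i}))"

lemma exp_latency_split:
  "exp_latency n F i =
    (\<Sum>t<m. ennreal (measure_pmf.prob (run n F t) {s. pending s i})) + tail_latency n F i m"
  unfolding exp_latency_def tail_latency_def
  by (subst suminf_offset[where i = m]) (simp_all add: add.commute)

lemma tail_latency_mono:
  assumes "\<And>t. t < m \<Longrightarrow> run n F t = run n G t" "exp_latency n F i \<le> exp_latency n G i"
  shows "tail_latency n F i m \<le> tail_latency n G i m"
proof -
  let ?head = "\<Sum>t<m. ennreal (measure_pmf.prob (run n F t) {s. pending s i})"
  have "?head + tail_latency n F i m \<le> ?head + tail_latency n G i m"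
    using assms exp_latency_split[of n F i m] exp_latency_split[of n G i m] by simp
  moreover have "?head \<noteq> \<top>"
    by (simp add: ennreal_sum_eq_top)
  ultimately show ?thesis
    by (simp add: ennreal_add_left_cancel_le)
qed

lemma hist_prob_fun_upd_cong:
  assumes "i < n" "\<And>hs. length hs < length h \<Longrightarrow> g hs = f i hs"
  shows "hist_prob n (f(i := g)) i h = hist_prob n f i h"
proof -
  have "hist_prob n (f(i := g)) i h = hist_prob n (f(i := f i)) i h"
    unfolding hist_prob_def using assms by (subst run_fun_upd_cong) auto
  then show ?thesis
    by simp
qed

lemma prob_pending_run_force_prefix:
  assumes "i < n" "length h \<le> t"
  shows "measure_pmf.prob (run n (f(i := force_prefix h p)) t)
      {s. pending s i \<and> take (length h) (fst (s i)) = h} =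
    measure_pmf.prob (run n (f(i := force_prefix h p)) t) {s. pending s i}"
  using take_run_force_prefix[OF _ assms(1) _ assms(2)]
  by (intro measure_pmf.finite_measure_eq_AE) (auto simp: AE_measure_pmf_iff)

lemma cond_latency_eq_tail_latency:
  assumes "i < n" "\<And>hs. length hs < length h \<Longrightarrow> g hs = f i hs"
  shows "cond_latency n (f(i := g)) i h = of_nat (length h) +
    ennreal (likelihood (f i) h / hist_prob n f i h) * tail_latency n (f(i := force_prefix h g)) i (length h)"
proof -
  let ?E = "{s. pending s i \<and> take (length h) (fst (s i)) = h}"
  let ?c = "likelihood (f i) h / hist_prob n f i h"
  let ?P = "\<lambda>t. measure_pmf.prob (run n (f(i := force_prefix h g)) t) {s. pending s i}"
  let ?term = "\<lambda>t. if t < length h then 1 else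
    ennreal (measure_pmf.prob (run n (f(i := g)) t) ?E / hist_prob n (f(i := g)) i h)"
  have "0 \<le> ?c"
    by (simp add: likelihood_nonneg hist_prob_def)
  moreover have "measure_pmf.prob (run n (f(i := g)) (t + length h)) ?E =
      likelihood (f i) h * ?P (t + length h)" for t
    using measure_run_likelihood[OF assms(1) order.refl, where h = h and f = f and p = g and t = "t + length h"]
      likelihood_cong[of h g "f i"] assms prob_pending_run_force_prefix[OF assms(1)]
    by simp
  moreover have "hist_prob n (f(i := g)) i h = hist_prob n f i h"
    using assms(1) by (rule hist_prob_fun_upd_cong) (rule assms(2))
  ultimately have "?term (t + length h) = ennreal ?c * ennreal (?P (t + length h))" for t
    by (simp add: ennreal_mult[symmetric] del: ennreal_mult')
  then have "(\<Sum>t. ?term (t + length h)) = (\<Sum>t. ennreal ?c * ennreal (?P (t + length h)))"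
    by (rule suminf_cong)
  also have "\<dots> = ennreal ?c * tail_latency n (f(i := force_prefix h g)) i (length h)"
    unfolding tail_latency_def by (rule ennreal_suminf_cmult)
  finally have tail: "(\<Sum>t. ?term (t + length h)) =
      ennreal ?c * tail_latency n (f(i := force_prefix h g)) i (length h)" .
  have head: "(\<Sum>t<length h. ?term t) = of_nat (length h)"
    by simp
  have "cond_latency n (f(i := g)) i h = (\<Sum>t. ?term (t + length h)) + (\<Sum>t<length h. ?term t)"
    unfolding cond_latency_def by (rule suminf_offset[where f = ?term, OF summableI])
  then show ?thesis
    unfolding tail head by (simp only: add.commute)
qed

lemma cond_latency_le_if_force_prefix_le:
  assumes "i < n" "\<And>hs. length hs < length h \<Longrightarrow> g hs = f i hs"
    "exp_latency n (f(i := force_prefix h (f i))) i \<le> exp_latency n (f(i := force_prefix h g)) i"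
  shows "cond_latency n f i h \<le> cond_latency n (f(i := g)) i h"
proof -
  let ?c = "ennreal (likelihood (f i) h / hist_prob n f i h)"
  have "run n (f(i := force_prefix h (f i))) t = run n (f(i := force_prefix h g)) t" if "t < length h" for t
    using that by (intro run_fun_upd_cong[OF assms(1)]) (simp add: force_prefix_def)
  then have tail_le: "tail_latency n (f(i := force_prefix h (f i))) i (length h) \<le>
      tail_latency n (f(i := force_prefix h g)) i (length h)"
    using assms(3) by (rule tail_latency_mono)
  have "cond_latency n f i h =
      of_nat (length h) + ?c * tail_latency n (f(i := force_prefix h (f i))) i (length h)"
    using cond_latency_eq_tail_latency[OF assms(1), of h "f i" f] by simp
  also have "\<dots> \<le> of_nat (length h) + ?c * tail_latency n (f(i := force_prefix h g)) i (length h)"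
    using tail_le by (intro add_left_mono mult_left_mono) simp_all
  also have "\<dots> = cond_latency n (f(i := g)) i h"
    using cond_latency_eq_tail_latency[OF assms(1), of h g f] assms(2) by simp
  finally show ?thesis .
qed

section \<open>Equilibria\<close>

lemma consistent_if_hist_prob_pos: "hist_prob n f i h > 0 \<Longrightarrow> consistent n f i h"
  unfolding hist_prob_def consistent_def
  by (erule less_le_trans, intro measure_pmf.finite_measure_mono) auto

lemma feasible_if_consistent:
  assumes "i < n" "consistent n f i h"
  shows "feasible (f i) h"
proof -
  have "measure_pmf.prob (run n f (length h)) {s. fst (s i) = h} \<noteq> 0"
    using assms(2) by (simp add: consistent_def)
  then obtain s where "s \<in> set_pmf (run n f (length h))" "fst (s i) = h"
    by (auto simp: measure_pmf_zero_iff)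
  then show ?thesis
    using set_run assms(1) by blast
qed

lemma consistent_singleton:
  assumes "i < n" "a \<in> set_pmf (f i [])"
  shows "consistent n f i [a]"
proof -
  obtain s where s: "s \<in> set_pmf (step_given n f i init_state a)"
    using set_pmf_not_empty[of "step_given n f i init_state a"] by blast
  then have "s \<in> set_pmf (run n f 1)"
    using assms by (auto simp: step_eq_bind_step_given[OF assms(1)] action_pmf_def init_state_def pending_def)
  moreover have "fst (s i) = [a]"
    using s assms(1) by (auto simp: step_given_def outcome_def init_state_def pending_def)
  ultimately show ?thesis
    unfolding consistent_def by (auto intro: measure_pmf_posI)
qed

lemma best_response_imp_equilibrium:
  assumes "\<forall>i<n. is_protocol k (f i)" "\<forall>i<n. best_response n k f i"
  shows "equilibrium n k f"
  unfolding equilibrium_def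
proof (intro allI impI)
  fix i h g
  assume i: "i < n" and pos: "hist_prob n f i h > 0" and g: "is_protocol k g"
    and agree: "\<forall>hs. length hs < length h \<longrightarrow> g hs = f i hs"
  have "feasible (f i) h"
    using pos i feasible_if_consistent consistent_if_hist_prob_pos by blast
  with agree have "feasible g h"
    by (simp add: feasible_def)
  have "exp_latency n (f(i := force_prefix h (f i))) i = exp_latency n f i"
    using exp_latency_force_prefix_best_response assms i \<open>feasible (f i) h\<close> by blast
  also have "\<dots> \<le> exp_latency n (f(i := force_prefix h g)) i"
    using assms(2) i is_protocol_force_prefix[OF g \<open>feasible g h\<close>] by (simp add: best_response_def)
  finally show "cond_latency n f i h \<le> cond_latency n (f(i := g)) i h"
    using i agree by (intro cond_latency_le_if_force_prefix_le) simp_all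
qed

lemma hist_prob_Nil: "hist_prob n f i [] = 1"
  by (simp add: hist_prob_def init_state_def pending_def)

lemma cond_latency_Nil: "cond_latency n f i [] = exp_latency n f i"
  by (simp add: cond_latency_def hist_prob_Nil exp_latency_def)

lemma equilibrium_imp_best_response:
  assumes "equilibrium n k f" "i < n"
  shows "best_response n k f i"
  unfolding best_response_def
proof (intro allI impI)
  fix r
  assume "is_protocol k r"
  then have "cond_latency n f i [] \<le> cond_latency n (f(i := r)) i []"
    using assms by (simp add: equilibrium_def hist_prob_Nil)
  then show "exp_latency n f i \<le> exp_latency n (f(i := r)) i"
    by (simp add: cond_latency_Nil)
qed

lemma equilibrium_iff_best_response:
  "\<forall>i<n. is_protocol k (f i) \<Longrightarrow> equilibrium n k f \<longleftrightarrow> (\<forall>i<n. best_response n k f i)"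
  using best_response_imp_equilibrium equilibrium_imp_best_response by blast

lemma exp_latency_Gset:
  assumes "i < n" "is_protocol k (f i)" "best_response n k f i" "g \<in> Gset n f i"
  shows "exp_latency n (f(i := g)) i = exp_latency n f i"
proof -
  obtain h where "g = gdev f i h" "consistent n f i h"
    using assms(4) by (auto simp: Gset_def)
  then show ?thesis
    using exp_latency_force_prefix_best_response[OF assms(1-3)] feasible_if_consistent[OF assms(1)]
    by (simp add: gdev_eq_force_prefix)
qed

lemma best_response_iff_Gset:
  assumes "i < n" "is_protocol k (f i)"
  shows "best_response n k f i \<longleftrightarrow>
    (\<forall>g\<in>Gset n f i. \<forall>r\<in>Gset n f i.
       exp_latency n (f(i := g)) i = exp_latency n (f(i := r)) i \<and>
       exp_latency n (f(i := r)) i = exp_latency n f i) \<and>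
    (\<forall>g\<in>Gset n f i. \<forall>r. is_protocol k r \<longrightarrow> r \<notin> Gset n f i \<longrightarrow>
       exp_latency n (f(i := g)) i \<le> exp_latency n (f(i := r)) i)"
  (is "_ \<longleftrightarrow> ?indifferent \<and> ?optimal")
proof
  assume br: "best_response n k f i"
  then have Gset_eq: "exp_latency n (f(i := g)) i = exp_latency n f i" if "g \<in> Gset n f i" for g
    using exp_latency_Gset assms that by blast
  then have ?indifferent
    by simp
  moreover have ?optimal
    using br Gset_eq by (simp add: best_response_def)
  ultimately show "?indifferent \<and> ?optimal" ..
next
  assume "?indifferent \<and> ?optimal"
  then have indifferent: ?indifferent and optimal: ?optimal
    by blast+
  obtain a where "a \<in> set_pmf (f i [])"
    using set_pmf_not_empty[of "f i []"] by blast
  then have g1: "gdev f i [a] \<in> Gset n f i"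
    using consistent_singleton assms(1) by (auto simp: Gset_def)
  show "best_response n k f i"
    unfolding best_response_def
  proof (intro allI impI)
    fix r
    assume r: "is_protocol k r"
    show "exp_latency n f i \<le> exp_latency n (f(i := r)) i"
    proof (cases "r \<in> Gset n f i")
      case True
      then have "exp_latency n (f(i := r)) i = exp_latency n f i"
        using indifferent g1 by blast
      then show ?thesis
        by simp
    next
      case False
      have "exp_latency n (f(i := gdev f i [a])) i = exp_latency n f i"
        using indifferent g1 by blast
      then have "exp_latency n f i = exp_latency n (f(i := gdev f i [a])) i"
        by (rule sym)
      also have "\<dots> \<le> exp_latency n (f(i := r)) i"
        using optimal g1 r False by blast
      finally show ?thesis .
    qed
  qed
qed

theorem lemma2:
  fixes n k :: nat and f :: profile
  assumes "\<forall>i<n. is_protocol k (f i)"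
  shows "equilibrium n k f \<longleftrightarrow>
    (\<forall>i<n.
       (\<forall>g\<in>Gset n f i. \<forall>r\<in>Gset n f i.
          exp_latency n (f(i := g)) i = exp_latency n (f(i := r)) i \<and>
          exp_latency n (f(i := r)) i = exp_latency n f i) \<and>
       (\<forall>g\<in>Gset n f i. \<forall>r. is_protocol k r \<longrightarrow> r \<notin> Gset n f i \<longrightarrow>
          exp_latency n (f(i := g)) i \<le> exp_latency n (f(i := r)) i))"
  unfolding equilibrium_iff_best_response[OF assms]
  by (simp only: best_response_iff_Gset assms cong: imp_cong)

end
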